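(* In the high-dimensional setting below, assume $\epsilon_{I,j}\ne0$ for all $j$, that for some $c>1$ $$\lambda\gamma\ge\frac{c+1}{c-1}\max_{j\in[p]}\frac{\|(X^{(n)}_{I,j^c})^\top\epsilon_{I,j}\|_\infty}{\|\epsilon_{I,j}\|_2}\quad\text{and}\quad\lambda\ge\frac{c+1}{c-1}\max_{i\in[n]}\Big(\sum_{j\in[p]}\frac{\epsilon_{ij}^2}{\|\epsilon_{I,j}\|_2^2}\Big)^{1/2},$$ and that there is $V\in\mathbb R^{n\times p}$ with $\|V_{i,\bullet}\|_2\le1$ for all $i$ such that for every $j\in[p]$ $$\|M\widehat\Delta_{\bullet,j}\|_2^2\le-2\bar\xi_{\bullet,j}^\top M\widehat\Delta_{\bullet,j}-2\lambda\|\bar\xi_{\bullet,j}\|_2V_{\bullet,j}^\top\widehat\Delta^\Theta_{\bullet,j}+2\lambda\gamma\|\bar\xi_{\bullet,j}\|_2\big(\|B^*_{j^c,j}\|_1-\|\widehat B_{j^c,j}\|_1\big)+\lambda^2\big(\gamma\|\widehat\Delta^B_{\bullet,j}\|_1+|V_{\bullet,j}^\top\widehat\Delta^\Theta_{\bullet,j}|\big)^2.$$ Then $$\|M\widehat\Delta\|_F^2\le4\lambda c\|\xi_{I,\bullet}^\top\|_{2,\infty}\big(\gamma\|\widehat\Delta^B_{\mathcal J}\|_{1,1}+\|\widehat\Delta^\Theta_{O,\bullet}\|_{2,1}\big)+\lambda^2(1+c)^2\big(\gamma\|\widehat\Delta^B_{\mathcal J}\|_{1,1}+\|\widehat\Del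ta^\Theta_{O,\bullet}\|_{2,1}\big)^2.$$
   Context: High-dimensional setting. Let $n,p\ge1$, $[n]=\{1,\dots,n\}$. $X=Y+E^*\in\mathbb R^{n\times p}$ where (C1) the rows of $Y$ are independent $\mathcal N_p(\mu^*,\Sigma^* )$, $\Sigma^*$ positive definite; (C2) $E^*$ is deterministic, $[n]=I\cup O$ a partition with the rows of $E^*$ indexed by $I$ equal to zero, and every row of $E^*(\Sigma^* )^{-1/2}$ of Euclidean norm at most $M_E\sqrt p$; $\mu^*=0$. $\Omega^*=(\Sigma^* )^{-1}$ with diagonal entries $\omega^*_{jj}$, $B^*=\Omega^*\mathrm{diag}(\Omega^* )^{-1}$, $X^{(n)}=X/\sqrt n$, $\Theta^*=E^*B^*/\sqrt n$, $\xi=X^{(n)}B^*-\Theta^*$, $\epsilon_{ij}=\sqrt n(\omega^*_{jj})^{1/2}\xi_{ij}$. Notation: $A_{i,\bullet}$, $A_{\bullet,j}$ rows/columns, $A_{K,J}$ submatrices, $j^c=[p]\setminus\{j\}$, $\|A\|_{q_1,q_2}=(\sum_i\|A_{i,\bullet}\|_{q_1}^{q_2})^{1/q_2}$, $\|A^\top\|_{2,1}=\sum_j\|A_{\bullet,j}\|_2$, $\|A^\top\|_{2,\infty}=\max_j\|A_{\bullet,j}\|_2$, $\|A\|_F=\|A\|_{2,2}$. Estimator: for $\lambda,\gamma\ge0$, $(\widehat B,\widehat\Theta)$ minimizes $F(B,\Theta)=\|(X^{(n)}B-\Theta)^\top\|_{2,1}+\lambda(\|\Theta\|_{2,1}+\gamma\|B\|_{1,1})$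 over $B\in\mathbb R^{p\times p}$ with all $B_{jj}=1$ and $\Theta\in\mathbb R^{n\times p}$. Let $\mathcal J=\{J_j:j\in[p]\}$, $J_j\subset[p]$, with $B^*_{i,j}=0$ whenever $i\notin J_j$; for a $p\times p$ matrix $A$, $A_{\mathcal J}$ zeroes entries $A_{i,j}$ with $i\notin J_j$. $\xi_O$ is the $n\times p$ matrix equal to $\xi$ on rows indexed by $O$ and zero elsewhere; $\bar\xi=\xi-\xi_O$; $\bar\Theta^*=\Theta^*+\xi_O$. $\widehat\Delta^B=\widehat B-B^*$, $\widehat\Delta^\Theta=\widehat\Theta-\bar\Theta^*$, $\widehat\Delta\in\mathbb R^{(p+n)\times p}$ stacks $\widehat\Delta^B$ above $\widehat\Delta^\Theta$; $M=[X^{(n)},\,-I_n]\in\mathbb R^{n\times(p+n)}$. *)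

theory Defs
  imports "HOL-Analysis.Analysis"
begin

text \<open>Matrices are rendered with finite index types: an n x p matrix is
  real^'p^'n, rows indexed by 'n (so n = CARD('n)), columns by 'p (p = CARD('p)).\<close>

definition pos_def_mat :: "real^'p^'p \<Rightarrow> bool" where
  "pos_def_mat S \<longleftrightarrow> transpose S = S \<and> (\<forall>x. x \<noteq> 0 \<longrightarrow> x \<bullet> (S *v x) > 0)"

definition is_inv_sqrt :: "real^'p^'p \<Rightarrow> real^'p^'p \<Rightarrow> bool" where
  "is_inv_sqrt R S \<longleftrightarrow> pos_def_mat R \<and> R ** R = matrix_inv S"

definition Bstar :: "real^'p^'p \<Rightarrow> real^'p^'p" where
  "Bstar S = (\<chi> i j. matrix_inv S $ i $ j / matrix_inv S $ j $ j)"

definition Xn :: "real^'p^'n \<Rightarrow> real^'p^'n" where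
  "Xn X = (1 / sqrt (real CARD('n))) *\<^sub>R X"

definition Theta_star :: "real^'p^'n \<Rightarrow> real^'p^'p \<Rightarrow> real^'p^'n" where
  "Theta_star E S = (1 / sqrt (real CARD('n))) *\<^sub>R (E ** Bstar S)"

definition xi :: "real^'p^'n \<Rightarrow> real^'p^'n \<Rightarrow> real^'p^'p \<Rightarrow> real^'p^'n" where
  "xi X E S = Xn X ** Bstar S - Theta_star E S"

definition eps :: "real^'p^'n \<Rightarrow> real^'p^'n \<Rightarrow> real^'p^'p \<Rightarrow> real^'p^'n" where
  "eps X E S = (\<chi> i j. sqrt (real CARD('n)) * sqrt (matrix_inv S $ j $ j) * xi X E S $ i $ j)"

definition rows_on :: "'n set \<Rightarrow> real^'p^'n \<Rightarrow> real^'p^'n" where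
  "rows_on K A = (\<chi> i j. if i \<in> K then A $ i $ j else 0)"

text \<open>M = [X^(n), -I_n], an n x (p+n) matrix.\<close>
definition Mmat :: "real^'p^'n \<Rightarrow> real^('p + 'n)^'n" where
  "Mmat A = (\<chi> i k. case k of Inl l \<Rightarrow> A $ i $ l | Inr l \<Rightarrow> (if l = i then -1 else 0))"

definition stack :: "real^'p^'p \<Rightarrow> real^'p^'n \<Rightarrow> real^'p^('p + 'n)" where
  "stack DB DT = (\<chi> k j. case k of Inl l \<Rightarrow> DB $ l $ j | Inr l \<Rightarrow> DT $ l $ j)"

definition Fobj :: "real^'p^'n \<Rightarrow> real \<Rightarrow> real \<Rightarrow> real^'p^'p \<Rightarrow> real^'p^'n \<Rightarrow> real" where
  "Fobj X lam gam B T =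
     (\<Sum>j\<in>UNIV. norm (column j (Xn X ** B - T)))
     + lam * ((\<Sum>i\<in>UNIV. norm (T $ i)) + gam * (\<Sum>i\<in>UNIV. \<Sum>j\<in>UNIV. \<bar>B $ i $ j\<bar>))"

definition frob :: "real^'b^'a \<Rightarrow> real" where
  "frob A = sqrt (\<Sum>i\<in>UNIV. \<Sum>j\<in>UNIV. (A $ i $ j)\<^sup>2)"

end

theory Submission
  imports Defs
begin

text \<open>The residual of the target (B*, Theta* + xi_O) is the inlier noise xi_I. Comparing the objective
  at the minimiser with its value there, and linearising each column norm by Cauchy-Schwarz, the two
  tuning conditions make the noise cross terms at most kappa = (c - 1)/(c + 1) times the penalties.
  Hence the penalised deviation off the support of B* and on the inlier rows of Theta is dominated by
  the part on the support and on the outliers: the total penalty is at most (1 + c) times the restricted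
  one S. Summing the assumed column inequalities, every cross term is at most
  (1 + kappa) lambda max_j |xi_{I,j}| times the total penalty and the quadratic term at most its
  square; the cone condition turns this into the bound in terms of S.\<close>

section \<open>Inequalities for finite L2 sums\<close>

lemma L2_set_squared: "(L2_set f A)\<^sup>2 = (\<Sum>i\<in>A. (f i)\<^sup>2)"
  unfolding L2_set_def by (simp add: sum_nonneg)

lemma sum_squares_le_square_sum:
  fixes f :: "'a \<Rightarrow> real"
  assumes "\<And>i. i \<in> A \<Longrightarrow> 0 \<le> f i"
  shows "(\<Sum>i\<in>A. (f i)\<^sup>2) \<le> (sum f A)\<^sup>2"
proof -
  have "L2_set f A \<le> sum f A" by (rule L2_set_le_sum) (use assms in auto)
  then have "(L2_set f A)\<^sup>2 \<le> (sum f A)\<^sup>2" by (intro power_mono) auto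
  then show ?thesis by (simp add: L2_set_squared)
qed

lemma L2_set_mult_abs: "L2_set (\<lambda>i. s * f i) A = \<bar>s\<bar> * L2_set f A"
  by (simp add: L2_set_def power_mult_distrib sum_distrib_left[symmetric] real_sqrt_mult)

lemma sum_mult_le_L2_set: "(\<Sum>i\<in>A. f i * g i) \<le> L2_set f A * L2_set g A"
proof -
  have "(\<Sum>i\<in>A. f i * g i) \<le> (\<Sum>i\<in>A. \<bar>f i\<bar> * \<bar>g i\<bar>)"
    by (rule sum_mono) (metis abs_ge_self abs_mult)
  also have "\<dots> \<le> L2_set f A * L2_set g A" by (rule L2_set_mult_ineq)
  finally show ?thesis .
qed

text \<open>Cauchy-Schwarz against the unit vector x / |x|; this linearises the loss at the true parameter.\<close>
lemma L2_set_add_ge_linearization: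
  assumes pos: "0 < L2_set x A"
  shows "L2_set x A + (\<Sum>i\<in>A. x i * m i) / L2_set x A \<le> L2_set (\<lambda>i. x i + m i) A"
proof -
  have "(L2_set x A)\<^sup>2 = (\<Sum>i\<in>A. x i * x i)"
    unfolding L2_set_squared by (simp add: power2_eq_square)
  then have "(L2_set x A)\<^sup>2 + (\<Sum>i\<in>A. x i * m i) = (\<Sum>i\<in>A. x i * (x i + m i))"
    by (simp add: distrib_left sum.distrib)
  also have "\<dots> \<le> L2_set x A * L2_set (\<lambda>i. x i + m i) A" by (rule sum_mult_le_L2_set)
  finally show ?thesis using pos by (simp add: field_simps power2_eq_square)
qed

lemma L2_set_diff_ge: "L2_set g A - L2_set f A \<ge> - L2_set (\<lambda>i. g i - f i) A"
proof -
  have "L2_set (\<lambda>i. g i + (f i - g i)) A \<le> L2_set g A + L2_set (\<lambda>i. f i - g i) A"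
    by (rule L2_set_triangle_ineq)
  moreover have "L2_set (\<lambda>i. f i - g i) A = L2_set (\<lambda>i. g i - f i) A"
    unfolding L2_set_def by (rule arg_cong[where f = sqrt], rule sum.cong) (simp_all add: power2_commute)
  ultimately show ?thesis by simp
qed

lemma sum_partition_UNIV:
  fixes f :: "'a::finite \<Rightarrow> 'b::comm_monoid_add"
  assumes "I \<union> K = UNIV" "I \<inter> K = {}"
  shows "sum f UNIV = sum f I + sum f K"
  using sum.union_disjoint[of I K f] assms by simp

lemma sum_abs_inner_le_sum_L2_rows:
  fixes V d :: "'n::finite \<Rightarrow> 'p::finite \<Rightarrow> real"
  assumes "\<And>i. L2_set (V i) UNIV \<le> 1"
  shows "(\<Sum>j\<in>UNIV. \<bar>\<Sum>i\<in>UNIV. V i j * d i j\<bar>) \<le> (\<Sum>i\<in>UNIV. L2_set (d i) UNIV)"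
proof -
  have "(\<Sum>j\<in>UNIV. \<bar>\<Sum>i\<in>UNIV. V i j * d i j\<bar>) \<le> (\<Sum>j\<in>UNIV. \<Sum>i\<in>UNIV. \<bar>V i j\<bar> * \<bar>d i j\<bar>)"
  proof (rule sum_mono)
    fix j
    show "\<bar>\<Sum>i\<in>UNIV. V i j * d i j\<bar> \<le> (\<Sum>i\<in>UNIV. \<bar>V i j\<bar> * \<bar>d i j\<bar>)"
      using sum_abs[of "\<lambda>i. V i j * d i j" UNIV] by (simp add: abs_mult)
  qed
  also have "\<dots> = (\<Sum>i\<in>UNIV. \<Sum>j\<in>UNIV. \<bar>V i j\<bar> * \<bar>d i j\<bar>)" by (rule sum.swap)
  also have "\<dots> \<le> (\<Sum>i\<in>UNIV. L2_set (V i) UNIV * L2_set (d i) UNIV)"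
    by (intro sum_mono L2_set_mult_ineq)
  also have "\<dots> \<le> (\<Sum>i\<in>UNIV. L2_set (d i) UNIV)"
    using mult_right_mono[OF assms L2_set_nonneg] by (intro sum_mono) simp
  finally show ?thesis .
qed

text \<open>The algebra turning the basic inequality into the cone condition; here q, r, s, t stand for
  the penalised deviations of B on and off its support and of Theta on the inliers and outliers.\<close>
lemma cone_from_basic_inequality:
  fixes c q r s t :: real
  assumes c: "1 < c" and t: "0 \<le> t"
    and basic: "- ((c - 1) / (c + 1)) * (q + r + s) + s - t + r - q \<le> 0"
  shows "q + r + s + t \<le> (1 + c) * (q + t)"
proof -
  define K where "K = (c - 1) / (c + 1)"
  have cK: "(c + 1) * K = c - 1" using c by (simp add: K_def)
  have "- ((c + 1) * K) * (q + r + s) + (c + 1) * (s - t + r - q)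
      = (c + 1) * (- K * (q + r + s) + s - t + r - q)"
    by (simp add: algebra_simps)
  also have "\<dots> \<le> 0"
    using basic c unfolding K_def[symmetric] by (intro mult_nonneg_nonpos) auto
  finally have "2 * r + 2 * s \<le> 2 * (c * q) + c * t + t"
    unfolding cK by (simp add: algebra_simps)
  moreover have "t \<le> c * t" using c t by (simp add: mult_le_cancel_right1)
  moreover have "(1 + c) * (q + t) = q + t + c * q + c * t" by (simp add: algebra_simps)
  ultimately show ?thesis by linarith
qed

section \<open>The deterministic argument\<close>

text \<open>In the paper's notation xb is the inlier noise xi - xi_O, Bs = B*, Tb = Theta* + xi_O, and
  pred_err is M Delta.\<close>
locale robust_lasso_deviation =
  fixes Xs :: "'n::finite \<Rightarrow> 'p::finite \<Rightarrow> real"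
    and xb :: "'n \<Rightarrow> 'p \<Rightarrow> real"
    and Bh Bs :: "'p \<Rightarrow> 'p \<Rightarrow> real"
    and Th Tb :: "'n \<Rightarrow> 'p \<Rightarrow> real"
    and Iset Oset :: "'n set" and J :: "'p \<Rightarrow> 'p set"
    and lam gam c :: real
  assumes inliers_outliers: "Iset \<union> Oset = UNIV" "Iset \<inter> Oset = {}"
    and noise_outliers: "\<And>i j. i \<in> Oset \<Longrightarrow> xb i j = 0"
    and Tb_inliers: "\<And>i j. i \<in> Iset \<Longrightarrow> Tb i j = 0"
    and Bh_diag: "\<And>j. Bh j j = 1" and Bs_diag: "\<And>j. Bs j j = 1"
    and Bs_support: "\<And>i j. i \<notin> J j \<Longrightarrow> Bs i j = 0"
    and noise_nonzero: "\<And>j. 0 < L2_set (\<lambda>i. xb i j) UNIV"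
    and c_gt_1: "1 < c" and lam_nonneg: "0 \<le> lam" and gam_nonneg: "0 \<le> gam"
    and correlation_bound: "\<And>j l. l \<noteq> j \<Longrightarrow>
      \<bar>\<Sum>i\<in>UNIV. xb i j * Xs i l\<bar> \<le> (c - 1) / (c + 1) * lam * gam * L2_set (\<lambda>i. xb i j) UNIV"
    and row_noise_bound: "\<And>i.
      L2_set (\<lambda>j. xb i j / L2_set (\<lambda>i'. xb i' j) UNIV) UNIV \<le> (c - 1) / (c + 1) * lam"
begin

definition kappa :: real where
  "kappa = (c - 1) / (c + 1)"

definition noise_norm :: "'p \<Rightarrow> real" where
  "noise_norm j = L2_set (\<lambda>i. xb i j) UNIV"

definition noise_max :: real where
  "noise_max = (MAX j\<in>UNIV. noise_norm j)"

definition B_dev :: "'p \<Rightarrow> 'p \<Rightarrow> real" where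
  "B_dev i j = Bh i j - Bs i j"

definition T_dev :: "'n \<Rightarrow> 'p \<Rightarrow> real" where
  "T_dev i j = Th i j - Tb i j"

definition pred_err :: "'n \<Rightarrow> 'p \<Rightarrow> real" where
  "pred_err i j = (\<Sum>l\<in>UNIV. Xs i l * B_dev l j) - T_dev i j"

definition col_dev :: "'p \<Rightarrow> real" where
  "col_dev j = (\<Sum>i\<in>UNIV. \<bar>B_dev i j\<bar>)"

definition row_dev :: "'n \<Rightarrow> real" where
  "row_dev i = L2_set (T_dev i) UNIV"

definition total_dev :: real where
  "total_dev = gam * (\<Sum>j\<in>UNIV. col_dev j) + (\<Sum>i\<in>UNIV. row_dev i)"

definition support_dev :: real where
  "support_dev = gam * (\<Sum>j\<in>UNIV. \<Sum>i\<in>J j. \<bar>B_dev i j\<bar>) + (\<Sum>i\<in>Oset. row_dev i)"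

definition design_cross :: "'p \<Rightarrow> real" where
  "design_cross j = (\<Sum>l\<in>UNIV. (\<Sum>i\<in>UNIV. xb i j * Xs i l) * B_dev l j)"

definition theta_cross :: "'p \<Rightarrow> real" where
  "theta_cross j = (\<Sum>i\<in>UNIV. xb i j * T_dev i j)"

lemma kappa_pos: "0 < kappa"
  using c_gt_1 by (simp add: kappa_def)

lemma noise_norm_pos: "0 < noise_norm j"
  unfolding noise_norm_def by (rule noise_nonzero)

lemma noise_norm_le_max: "noise_norm j \<le> noise_max"
  unfolding noise_max_def by (rule Max_ge) auto

lemma noise_max_nonneg: "0 \<le> noise_max"
  using order_trans[OF less_imp_le[OF noise_norm_pos] noise_norm_le_max] .

lemma col_dev_nonneg: "0 \<le> col_dev j"
  by (simp add: col_dev_def sum_nonneg)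

lemma row_dev_nonneg: "0 \<le> row_dev i"
  by (simp add: row_dev_def)

lemma sum_row_dev_split: "(\<Sum>i\<in>UNIV. row_dev i) = (\<Sum>i\<in>Iset. row_dev i) + (\<Sum>i\<in>Oset. row_dev i)"
  by (rule sum_partition_UNIV[OF inliers_outliers])

lemma noise_pred_err_inner: "(\<Sum>i\<in>UNIV. xb i j * pred_err i j) = design_cross j - theta_cross j"
proof -
  have "(\<Sum>i\<in>UNIV. xb i j * pred_err i j)
      = (\<Sum>i\<in>UNIV. \<Sum>l\<in>UNIV. xb i j * Xs i l * B_dev l j) - theta_cross j"
    by (simp add: pred_err_def theta_cross_def right_diff_distrib sum_subtractf sum_distrib_left mult.assoc)
  also have "(\<Sum>i\<in>UNIV. \<Sum>l\<in>UNIV. xb i j * Xs i l * B_dev l j) = design_cross j"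
    unfolding design_cross_def by (subst sum.swap) (simp add: sum_distrib_right)
  finally show ?thesis .
qed

text \<open>The diagonal of the deviation vanishes, so only off-diagonal correlations enter.\<close>
lemma design_cross_bound: "\<bar>design_cross j\<bar> \<le> kappa * lam * gam * noise_norm j * col_dev j"
proof -
  have "\<bar>design_cross j\<bar> \<le> (\<Sum>l\<in>UNIV. \<bar>(\<Sum>i\<in>UNIV. xb i j * Xs i l) * B_dev l j\<bar>)"
    unfolding design_cross_def by (rule sum_abs)
  also have "\<dots> \<le> (\<Sum>l\<in>UNIV. kappa * lam * gam * noise_norm j * \<bar>B_dev l j\<bar>)"
  proof (rule sum_mono)
    fix l
    show "\<bar>(\<Sum>i\<in>UNIV. xb i j * Xs i l) * B_dev l j\<bar> \<le> kappa * lam * gam * noise_norm j * \<bar>B_dev l j\<bar>"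
    proof (cases "l = j")
      case True
      then show ?thesis by (simp add: B_dev_def Bh_diag Bs_diag)
    next
      case False
      then show ?thesis
        unfolding abs_mult noise_norm_def kappa_def by (intro mult_right_mono correlation_bound) auto
    qed
  qed
  also have "\<dots> = kappa * lam * gam * noise_norm j * col_dev j"
    by (simp add: col_dev_def sum_distrib_left)
  finally show ?thesis .
qed

lemma row_theta_cross_bound:
  "(\<Sum>j\<in>UNIV. \<bar>xb i j / noise_norm j\<bar> * \<bar>T_dev i j\<bar>) \<le> kappa * lam * row_dev i"
proof -
  have "(\<Sum>j\<in>UNIV. \<bar>xb i j / noise_norm j\<bar> * \<bar>T_dev i j\<bar>)
      \<le> L2_set (\<lambda>j. xb i j / noise_norm j) UNIV * row_dev i"
    unfolding row_dev_def by (rule L2_set_mult_ineq)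
  also have "\<dots> \<le> kappa * lam * row_dev i"
    using row_noise_bound[of i] by (intro mult_right_mono row_dev_nonneg) (simp add: noise_norm_def kappa_def)
  finally show ?thesis .
qed

lemma weighted_theta_cross_le:
  "(\<Sum>j\<in>UNIV. theta_cross j / noise_norm j) \<le> kappa * lam * (\<Sum>i\<in>Iset. row_dev i)"
proof -
  have "(\<Sum>j\<in>UNIV. theta_cross j / noise_norm j)
      = (\<Sum>i\<in>UNIV. \<Sum>j\<in>UNIV. xb i j / noise_norm j * T_dev i j)"
    unfolding theta_cross_def by (subst sum.swap) (simp add: sum_divide_distrib)
  also have "\<dots> = (\<Sum>i\<in>Iset. \<Sum>j\<in>UNIV. xb i j / noise_norm j * T_dev i j)"
    using sum_partition_UNIV[OF inliers_outliers,
        of "\<lambda>i. \<Sum>j\<in>UNIV. xb i j / noise_norm j * T_dev i j"]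
    by (simp add: noise_outliers)
  also have "\<dots> \<le> (\<Sum>i\<in>Iset. kappa * lam * row_dev i)"
  proof (rule sum_mono)
    fix i
    have "(\<Sum>j\<in>UNIV. xb i j / noise_norm j * T_dev i j)
        \<le> (\<Sum>j\<in>UNIV. \<bar>xb i j / noise_norm j\<bar> * \<bar>T_dev i j\<bar>)"
      by (rule sum_mono) (metis abs_ge_self abs_mult)
    then show "(\<Sum>j\<in>UNIV. xb i j / noise_norm j * T_dev i j) \<le> kappa * lam * row_dev i"
      using row_theta_cross_bound[of i] by linarith
  qed
  finally show ?thesis by (simp add: sum_distrib_left)
qed

lemma data_fit_lower_bound:
  "(\<Sum>j\<in>UNIV. noise_norm j) - kappa * lam * (gam * (\<Sum>j\<in>UNIV. col_dev j) + (\<Sum>i\<in>Iset. row_dev i))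
    \<le> (\<Sum>j\<in>UNIV. L2_set (\<lambda>i. xb i j + pred_err i j) UNIV)"
proof -
  have column: "noise_norm j - kappa * lam * gam * col_dev j - theta_cross j / noise_norm j
      \<le> L2_set (\<lambda>i. xb i j + pred_err i j) UNIV" for j
  proof -
    have "noise_norm j + (design_cross j - theta_cross j) / noise_norm j
        \<le> L2_set (\<lambda>i. xb i j + pred_err i j) UNIV"
      using L2_set_add_ge_linearization[of "\<lambda>i. xb i j" UNIV "\<lambda>i. pred_err i j"] noise_norm_pos[of j]
      by (simp add: noise_norm_def noise_pred_err_inner)
    moreover have "- (kappa * lam * gam * col_dev j) * noise_norm j \<le> design_cross j"
      using design_cross_bound[of j] by (simp add: abs_le_iff algebra_simps)
    then have "- (kappa * lam * gam * col_dev j) \<le> design_cross j / noise_norm j"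
      by (simp add: pos_le_divide_eq noise_norm_pos)
    ultimately show ?thesis by (simp add: diff_divide_distrib)
  qed
  have "(\<Sum>j\<in>UNIV. noise_norm j) - kappa * lam * gam * (\<Sum>j\<in>UNIV. col_dev j)
      - (\<Sum>j\<in>UNIV. theta_cross j / noise_norm j)
      = (\<Sum>j\<in>UNIV. noise_norm j - kappa * lam * gam * col_dev j - theta_cross j / noise_norm j)"
    by (simp add: sum_subtractf sum_distrib_left)
  also have "\<dots> \<le> (\<Sum>j\<in>UNIV. L2_set (\<lambda>i. xb i j + pred_err i j) UNIV)"
    by (rule sum_mono) (rule column)
  finally have "(\<Sum>j\<in>UNIV. noise_norm j) - kappa * lam * gam * (\<Sum>j\<in>UNIV. col_dev j)
      - (\<Sum>j\<in>UNIV. theta_cross j / noise_norm j)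
      \<le> (\<Sum>j\<in>UNIV. L2_set (\<lambda>i. xb i j + pred_err i j) UNIV)" .
  moreover have "kappa * lam * (gam * (\<Sum>j\<in>UNIV. col_dev j) + (\<Sum>i\<in>Iset. row_dev i))
      = kappa * lam * gam * (\<Sum>j\<in>UNIV. col_dev j) + kappa * lam * (\<Sum>i\<in>Iset. row_dev i)"
    by (simp add: algebra_simps)
  ultimately show ?thesis using weighted_theta_cross_le by linarith
qed

lemma theta_penalty_gap:
  "(\<Sum>i\<in>Iset. row_dev i) - (\<Sum>i\<in>Oset. row_dev i)
    \<le> (\<Sum>i\<in>UNIV. L2_set (Th i) UNIV) - (\<Sum>i\<in>UNIV. L2_set (Tb i) UNIV)"
proof -
  have "(\<Sum>i\<in>UNIV. L2_set (Th i) UNIV - L2_set (Tb i) UNIV)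
      = (\<Sum>i\<in>Iset. L2_set (Th i) UNIV - L2_set (Tb i) UNIV)
        + (\<Sum>i\<in>Oset. L2_set (Th i) UNIV - L2_set (Tb i) UNIV)"
    by (rule sum_partition_UNIV[OF inliers_outliers])
  moreover have "(\<Sum>i\<in>Iset. L2_set (Th i) UNIV - L2_set (Tb i) UNIV) = (\<Sum>i\<in>Iset. row_dev i)"
    by (rule sum.cong) (auto simp: row_dev_def T_dev_def Tb_inliers L2_set_0' intro!: L2_set_cong)
  moreover have "(\<Sum>i\<in>Oset. - row_dev i) \<le> (\<Sum>i\<in>Oset. L2_set (Th i) UNIV - L2_set (Tb i) UNIV)"
    by (rule sum_mono) (simp add: row_dev_def T_dev_def[abs_def] L2_set_diff_ge)
  ultimately show ?thesis by (simp add: sum_subtractf sum_negf)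
qed

lemma B_penalty_gap:
  "(\<Sum>j\<in>UNIV. \<Sum>i\<in>UNIV - J j. \<bar>B_dev i j\<bar>) - (\<Sum>j\<in>UNIV. \<Sum>i\<in>J j. \<bar>B_dev i j\<bar>)
    \<le> (\<Sum>i\<in>UNIV. \<Sum>j\<in>UNIV. \<bar>Bh i j\<bar>) - (\<Sum>i\<in>UNIV. \<Sum>j\<in>UNIV. \<bar>Bs i j\<bar>)"
proof -
  have column: "(\<Sum>i\<in>UNIV - J j. \<bar>B_dev i j\<bar>) - (\<Sum>i\<in>J j. \<bar>B_dev i j\<bar>)
      \<le> (\<Sum>i\<in>UNIV. \<bar>Bh i j\<bar> - \<bar>Bs i j\<bar>)" for j
  proof -
    have "(\<Sum>i\<in>UNIV. \<bar>Bh i j\<bar> - \<bar>Bs i j\<bar>)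
        = (\<Sum>i\<in>UNIV - J j. \<bar>Bh i j\<bar> - \<bar>Bs i j\<bar>) + (\<Sum>i\<in>J j. \<bar>Bh i j\<bar> - \<bar>Bs i j\<bar>)"
      by (rule sum.subset_diff) auto
    moreover have "(\<Sum>i\<in>UNIV - J j. \<bar>Bh i j\<bar> - \<bar>Bs i j\<bar>) = (\<Sum>i\<in>UNIV - J j. \<bar>B_dev i j\<bar>)"
      by (rule sum.cong) (auto simp: B_dev_def Bs_support)
    moreover have "(\<Sum>i\<in>J j. - \<bar>B_dev i j\<bar>) \<le> (\<Sum>i\<in>J j. \<bar>Bh i j\<bar> - \<bar>Bs i j\<bar>)"
      by (rule sum_mono) (auto simp: B_dev_def abs_if)
    ultimately show ?thesis by (simp add: sum_negf)
  qed
  have "(\<Sum>j\<in>UNIV. \<Sum>i\<in>UNIV - J j. \<bar>B_dev i j\<bar>) - (\<Sum>j\<in>UNIV. \<Sum>i\<in>J j. \<bar>B_dev i j\<bar>)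
      \<le> (\<Sum>j\<in>UNIV. \<Sum>i\<in>UNIV. \<bar>Bh i j\<bar> - \<bar>Bs i j\<bar>)"
    unfolding sum_subtractf[symmetric] by (rule sum_mono) (rule column)
  also have "\<dots> = (\<Sum>i\<in>UNIV. \<Sum>j\<in>UNIV. \<bar>Bh i j\<bar>) - (\<Sum>i\<in>UNIV. \<Sum>j\<in>UNIV. \<bar>Bs i j\<bar>)"
    by (subst sum.swap) (simp add: sum_subtractf)
  finally show ?thesis .
qed

lemma col_dev_split: "col_dev j = (\<Sum>i\<in>J j. \<bar>B_dev i j\<bar>) + (\<Sum>i\<in>UNIV - J j. \<bar>B_dev i j\<bar>)"
  unfolding col_dev_def by (metis add.commute finite subset_UNIV sum.subset_diff)

text \<open>The hypothesis is minimality of the objective, compared with its value at the target, whose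
  residual is the inlier noise.\<close>
lemma cone_condition:
  assumes basic_inequality:
    "(\<Sum>j\<in>UNIV. L2_set (\<lambda>i. xb i j + pred_err i j) UNIV)
       + lam * ((\<Sum>i\<in>UNIV. L2_set (Th i) UNIV) + gam * (\<Sum>i\<in>UNIV. \<Sum>j\<in>UNIV. \<bar>Bh i j\<bar>))
     \<le> (\<Sum>j\<in>UNIV. noise_norm j)
       + lam * ((\<Sum>i\<in>UNIV. L2_set (Tb i) UNIV) + gam * (\<Sum>i\<in>UNIV. \<Sum>j\<in>UNIV. \<bar>Bs i j\<bar>))"
  shows "lam * total_dev \<le> lam * (1 + c) * support_dev"
proof -
  define on_supp where "on_supp = (\<Sum>j\<in>UNIV. \<Sum>i\<in>J j. \<bar>B_dev i j\<bar>)"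
  define off_supp where "off_supp = (\<Sum>j\<in>UNIV. \<Sum>i\<in>UNIV - J j. \<bar>B_dev i j\<bar>)"
  define inl where "inl = (\<Sum>i\<in>Iset. row_dev i)"
  define outl where "outl = (\<Sum>i\<in>Oset. row_dev i)"
  have cols: "(\<Sum>j\<in>UNIV. col_dev j) = on_supp + off_supp"
    by (simp add: col_dev_split sum.distrib on_supp_def off_supp_def)
  have "lam * (inl - outl) + lam * gam * (off_supp - on_supp)
      \<le> lam * ((\<Sum>i\<in>UNIV. L2_set (Th i) UNIV) - (\<Sum>i\<in>UNIV. L2_set (Tb i) UNIV))
        + lam * gam * ((\<Sum>i\<in>UNIV. \<Sum>j\<in>UNIV. \<bar>Bh i j\<bar>) - (\<Sum>i\<in>UNIV. \<Sum>j\<in>UNIV. \<bar>Bs i j\<bar>))"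
    using theta_penalty_gap B_penalty_gap lam_nonneg gam_nonneg unfolding inl_def outl_def on_supp_def off_supp_def
    by (intro order_refl add_mono mult_left_mono) auto
  then have "- kappa * (lam * gam * on_supp + lam * gam * off_supp + lam * inl)
      + lam * inl - lam * outl + lam * gam * off_supp - lam * gam * on_supp \<le> 0"
    using data_fit_lower_bound basic_inequality unfolding cols inl_def[symmetric]
    by (simp add: algebra_simps)
  then have "lam * gam * on_supp + lam * gam * off_supp + lam * inl + lam * outl
      \<le> (1 + c) * (lam * gam * on_supp + lam * outl)"
    using c_gt_1 lam_nonneg unfolding kappa_def
    by (intro cone_from_basic_inequality) (auto simp: outl_def sum_nonneg row_dev_nonneg)
  then show ?thesis
    unfolding total_dev_def support_dev_def sum_row_dev_split cols
    by (simp add: on_supp_def outl_def inl_def algebra_simps)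
qed

lemma total_dev_nonneg: "0 \<le> total_dev"
  unfolding total_dev_def
  by (intro add_nonneg_nonneg mult_nonneg_nonneg sum_nonneg gam_nonneg col_dev_nonneg row_dev_nonneg)

lemma offdiag_l1_gap_le_col_dev:
  "(\<Sum>i\<in>UNIV - {j}. \<bar>Bs i j\<bar>) - (\<Sum>i\<in>UNIV - {j}. \<bar>Bh i j\<bar>) \<le> col_dev j"
proof -
  have "(\<Sum>i\<in>UNIV - {j}. \<bar>Bs i j\<bar>) - (\<Sum>i\<in>UNIV - {j}. \<bar>Bh i j\<bar>) \<le> (\<Sum>i\<in>UNIV - {j}. \<bar>B_dev i j\<bar>)"
    unfolding sum_subtractf[symmetric] by (rule sum_mono) (auto simp: B_dev_def abs_if)
  also have "\<dots> \<le> col_dev j" unfolding col_dev_def by (rule sum_mono2) auto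
  finally show ?thesis .
qed

lemma theta_cross_sum_le: "(\<Sum>j\<in>UNIV. theta_cross j) \<le> kappa * lam * noise_max * (\<Sum>i\<in>UNIV. row_dev i)"
proof -
  have entry: "xb i j * T_dev i j \<le> noise_max * (\<bar>xb i j / noise_norm j\<bar> * \<bar>T_dev i j\<bar>)" for i j
  proof -
    have "xb i j * T_dev i j \<le> \<bar>xb i j / noise_norm j\<bar> * (noise_norm j * \<bar>T_dev i j\<bar>)"
      using noise_norm_pos[of j] by (simp add: abs_mult abs_divide) (metis abs_ge_self abs_mult)
    also have "\<dots> \<le> \<bar>xb i j / noise_norm j\<bar> * (noise_max * \<bar>T_dev i j\<bar>)"
      by (intro mult_left_mono mult_right_mono noise_norm_le_max) auto
    finally show ?thesis by (simp add: algebra_simps)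
  qed
  have "(\<Sum>j\<in>UNIV. theta_cross j) = (\<Sum>i\<in>UNIV. \<Sum>j\<in>UNIV. xb i j * T_dev i j)"
    unfolding theta_cross_def by (rule sum.swap)
  also have "\<dots> \<le> (\<Sum>i\<in>UNIV. noise_max * (kappa * lam * row_dev i))"
  proof (rule sum_mono)
    fix i
    have "(\<Sum>j\<in>UNIV. xb i j * T_dev i j)
        \<le> noise_max * (\<Sum>j\<in>UNIV. \<bar>xb i j / noise_norm j\<bar> * \<bar>T_dev i j\<bar>)"
      unfolding sum_distrib_left by (rule sum_mono) (rule entry)
    also have "\<dots> \<le> noise_max * (kappa * lam * row_dev i)"
      by (rule mult_left_mono[OF row_theta_cross_bound noise_max_nonneg])
    finally show "(\<Sum>j\<in>UNIV. xb i j * T_dev i j) \<le> noise_max * (kappa * lam * row_dev i)" .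
  qed
  also have "\<dots> = kappa * lam * noise_max * (\<Sum>i\<in>UNIV. row_dev i)"
    by (simp add: sum_distrib_left algebra_simps)
  finally show ?thesis .
qed

lemma column_error_bound:
  assumes "(L2_set (\<lambda>i. pred_err i j) UNIV)\<^sup>2 \<le>
      - 2 * (\<Sum>i\<in>UNIV. xb i j * pred_err i j) - 2 * lam * noise_norm j * w
      + 2 * lam * gam * noise_norm j * ((\<Sum>i\<in>UNIV - {j}. \<bar>Bs i j\<bar>) - (\<Sum>i\<in>UNIV - {j}. \<bar>Bh i j\<bar>))
      + lam\<^sup>2 * (gam * col_dev j + \<bar>w\<bar>)\<^sup>2"
  shows "(L2_set (\<lambda>i. pred_err i j) UNIV)\<^sup>2 \<le>
      2 * (1 + kappa) * lam * gam * noise_max * col_dev j + 2 * theta_cross j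
      + 2 * lam * noise_max * \<bar>w\<bar> + lam\<^sup>2 * (gam * col_dev j + \<bar>w\<bar>)\<^sup>2"
proof -
  have lg: "0 \<le> lam * gam" using lam_nonneg gam_nonneg by simp
  have "- design_cross j \<le> kappa * lam * gam * noise_norm j * col_dev j"
    using design_cross_bound[of j] by linarith
  also have "\<dots> \<le> kappa * lam * gam * noise_max * col_dev j"
  proof -
    have "0 \<le> kappa * lam * gam" using kappa_pos lg by (simp add: mult.assoc)
    from mult_left_mono[OF mult_right_mono[OF noise_norm_le_max col_dev_nonneg] this]
    show ?thesis by (simp only: mult.assoc)
  qed
  finally have design: "- design_cross j \<le> kappa * lam * gam * noise_max * col_dev j" .
  have "0 \<le> lam * noise_norm j" using lam_nonneg noise_norm_pos[of j] by simp
  then have "lam * noise_norm j * (- w) \<le> lam * noise_norm j * \<bar>w\<bar>"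
    by (rule mult_left_mono[rotated]) simp
  then have "- (lam * noise_norm j * w) \<le> lam * noise_norm j * \<bar>w\<bar>" by simp
  also have "\<dots> \<le> lam * noise_max * \<bar>w\<bar>"
    using lam_nonneg noise_norm_le_max[of j] by (simp add: mult_left_mono mult_right_mono)
  finally have weighted: "- (lam * noise_norm j * w) \<le> lam * noise_max * \<bar>w\<bar>" .
  have "noise_norm j * ((\<Sum>i\<in>UNIV - {j}. \<bar>Bs i j\<bar>) - (\<Sum>i\<in>UNIV - {j}. \<bar>Bh i j\<bar>))
      \<le> noise_max * col_dev j"
    using mult_left_mono[OF offdiag_l1_gap_le_col_dev less_imp_le[OF noise_norm_pos]]
      mult_right_mono[OF noise_norm_le_max col_dev_nonneg]
    by (rule order_trans)
  then have gap: "lam * gam * (noise_norm j * ((\<Sum>i\<in>UNIV - {j}. \<bar>Bs i j\<bar>) - (\<Sum>i\<in>UNIV - {j}. \<bar>Bh i j\<bar>)))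
      \<le> lam * gam * (noise_max * col_dev j)"
    by (rule mult_left_mono[OF _ lg])
  show ?thesis
    using assms noise_pred_err_inner[of j] design weighted gap
    by (simp add: algebra_simps)
qed

lemma prediction_error_le_total_dev:
  fixes V :: "'n \<Rightarrow> 'p \<Rightarrow> real"
  assumes V_rows: "\<And>i. L2_set (V i) UNIV \<le> 1"
    and column_ineq: "\<And>j. (L2_set (\<lambda>i. pred_err i j) UNIV)\<^sup>2 \<le>
      - 2 * (\<Sum>i\<in>UNIV. xb i j * pred_err i j) - 2 * lam * noise_norm j * (\<Sum>i\<in>UNIV. V i j * T_dev i j)
      + 2 * lam * gam * noise_norm j * ((\<Sum>i\<in>UNIV - {j}. \<bar>Bs i j\<bar>) - (\<Sum>i\<in>UNIV - {j}. \<bar>Bh i j\<bar>))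
      + lam\<^sup>2 * (gam * col_dev j + \<bar>\<Sum>i\<in>UNIV. V i j * T_dev i j\<bar>)\<^sup>2"
  shows "(\<Sum>j\<in>UNIV. (L2_set (\<lambda>i. pred_err i j) UNIV)\<^sup>2)
    \<le> 2 * (1 + kappa) * noise_max * (lam * total_dev) + (lam * total_dev)\<^sup>2"
proof -
  define W where "W j = \<bar>\<Sum>i\<in>UNIV. V i j * T_dev i j\<bar>" for j
  define D where "D = (\<Sum>j\<in>UNIV. col_dev j)"
  define R where "R = (\<Sum>i\<in>UNIV. row_dev i)"
  have W_sum: "(\<Sum>j\<in>UNIV. W j) \<le> R"
    unfolding W_def R_def row_dev_def by (rule sum_abs_inner_le_sum_L2_rows[OF V_rows])
  have quadratic: "(\<Sum>j\<in>UNIV. (gam * col_dev j + W j)\<^sup>2) \<le> total_dev\<^sup>2"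
  proof -
    have nonneg: "0 \<le> gam * col_dev j + W j" for j
      using gam_nonneg col_dev_nonneg[of j] by (simp add: W_def)
    have "(\<Sum>j\<in>UNIV. (gam * col_dev j + W j)\<^sup>2) \<le> (\<Sum>j\<in>UNIV. gam * col_dev j + W j)\<^sup>2"
      by (rule sum_squares_le_square_sum) (rule nonneg)
    also have "\<dots> \<le> total_dev\<^sup>2"
      using W_sum by (intro power_mono sum_nonneg nonneg)
        (simp_all add: total_dev_def sum.distrib sum_distrib_left R_def)
    finally show ?thesis .
  qed
  have "(\<Sum>j\<in>UNIV. (L2_set (\<lambda>i. pred_err i j) UNIV)\<^sup>2)
      \<le> (\<Sum>j\<in>UNIV. 2 * (1 + kappa) * lam * gam * noise_max * col_dev j + 2 * theta_cross j
            + 2 * lam * noise_max * W j + lam\<^sup>2 * (gam * col_dev j + W j)\<^sup>2)"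
    unfolding W_def by (intro sum_mono column_error_bound column_ineq)
  also have "\<dots> = 2 * (1 + kappa) * lam * gam * noise_max * D + 2 * (\<Sum>j\<in>UNIV. theta_cross j)
      + 2 * lam * noise_max * (\<Sum>j\<in>UNIV. W j) + lam\<^sup>2 * (\<Sum>j\<in>UNIV. (gam * col_dev j + W j)\<^sup>2)"
    by (simp add: sum.distrib sum_distrib_left D_def)
  also have "\<dots> \<le> 2 * (1 + kappa) * lam * gam * noise_max * D + 2 * (kappa * lam * noise_max * R)
      + 2 * lam * noise_max * R + lam\<^sup>2 * total_dev\<^sup>2"
    using theta_cross_sum_le W_sum quadratic lam_nonneg noise_max_nonneg unfolding R_def[symmetric]
    by (intro order_refl add_mono mult_left_mono) auto
  also have "\<dots> = 2 * (1 + kappa) * noise_max * (lam * total_dev) + (lam * total_dev)\<^sup>2"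
    by (simp add: total_dev_def D_def[symmetric] R_def[symmetric] power2_eq_square algebra_simps)
  finally show ?thesis .
qed

lemma prediction_error_bound:
  fixes V :: "'n \<Rightarrow> 'p \<Rightarrow> real"
  assumes basic_inequality:
    "(\<Sum>j\<in>UNIV. L2_set (\<lambda>i. xb i j + pred_err i j) UNIV)
       + lam * ((\<Sum>i\<in>UNIV. L2_set (Th i) UNIV) + gam * (\<Sum>i\<in>UNIV. \<Sum>j\<in>UNIV. \<bar>Bh i j\<bar>))
     \<le> (\<Sum>j\<in>UNIV. noise_norm j)
       + lam * ((\<Sum>i\<in>UNIV. L2_set (Tb i) UNIV) + gam * (\<Sum>i\<in>UNIV. \<Sum>j\<in>UNIV. \<bar>Bs i j\<bar>))"
    and V_rows: "\<And>i. L2_set (V i) UNIV \<le> 1"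
    and column_ineq: "\<And>j. (L2_set (\<lambda>i. pred_err i j) UNIV)\<^sup>2 \<le>
      - 2 * (\<Sum>i\<in>UNIV. xb i j * pred_err i j) - 2 * lam * noise_norm j * (\<Sum>i\<in>UNIV. V i j * T_dev i j)
      + 2 * lam * gam * noise_norm j * ((\<Sum>i\<in>UNIV - {j}. \<bar>Bs i j\<bar>) - (\<Sum>i\<in>UNIV - {j}. \<bar>Bh i j\<bar>))
      + lam\<^sup>2 * (gam * col_dev j + \<bar>\<Sum>i\<in>UNIV. V i j * T_dev i j\<bar>)\<^sup>2"
  shows "(\<Sum>j\<in>UNIV. (L2_set (\<lambda>i. pred_err i j) UNIV)\<^sup>2)
    \<le> 4 * lam * c * noise_max * support_dev + lam\<^sup>2 * (1 + c)\<^sup>2 * support_dev\<^sup>2"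
proof -
  have cone: "lam * total_dev \<le> lam * (1 + c) * support_dev"
    by (rule cone_condition[OF basic_inequality])
  have total_nonneg: "0 \<le> lam * total_dev" using lam_nonneg total_dev_nonneg by simp
  have factor: "(1 + kappa) * (1 + c) = 2 * c" using c_gt_1 by (simp add: kappa_def field_simps)
  have "(\<Sum>j\<in>UNIV. (L2_set (\<lambda>i. pred_err i j) UNIV)\<^sup>2)
      \<le> 2 * (1 + kappa) * noise_max * (lam * total_dev) + (lam * total_dev)\<^sup>2"
    by (rule prediction_error_le_total_dev[OF V_rows column_ineq])
  also have "\<dots> \<le> 2 * (1 + kappa) * noise_max * (lam * (1 + c) * support_dev) + (lam * (1 + c) * support_dev)\<^sup>2"
    using cone total_nonneg kappa_pos noise_max_nonneg by (intro add_mono mult_left_mono power_mono) auto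
  also have "\<dots> = 2 * ((1 + kappa) * (1 + c)) * lam * noise_max * support_dev + lam\<^sup>2 * (1 + c)\<^sup>2 * support_dev\<^sup>2"
    by (simp only: power_mult_distrib) (simp add: algebra_simps)
  also have "\<dots> = 4 * lam * c * noise_max * support_dev + lam\<^sup>2 * (1 + c)\<^sup>2 * support_dev\<^sup>2"
    unfolding factor by simp
  finally show ?thesis .
qed

end

section \<open>Translation from the matrix formulation\<close>

lemma norm_vec_eq_L2_set: "norm (x :: real^'n) = L2_set (\<lambda>i. x $ i) UNIV"
  unfolding norm_vec_def L2_set_def by simp

lemma frob_squared: "(frob A)\<^sup>2 = (\<Sum>j\<in>UNIV. (L2_set (\<lambda>i. A $ i $ j) UNIV)\<^sup>2)"
  unfolding frob_def L2_set_squared by (simp add: sum_nonneg) (rule sum.swap)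

lemma Mmat_stack_nth:
  fixes A :: "real^'p::finite^'n::finite" and DB :: "real^'p^'p" and DT :: "real^'p^'n"
  shows "(Mmat A ** stack DB DT) $ i $ j = (\<Sum>l\<in>UNIV. A $ i $ l * DB $ l $ j) - DT $ i $ j"
proof -
  have "(Mmat A ** stack DB DT) $ i $ j
      = (\<Sum>k\<in>(UNIV::'p set) <+> (UNIV::'n set). Mmat A $ i $ k * stack DB DT $ k $ j)"
    by (simp add: matrix_matrix_mult_def)
  also have "\<dots> = (\<Sum>l\<in>UNIV. A $ i $ l * DB $ l $ j) + (\<Sum>l\<in>UNIV. (if l = i then -1 else 0) * DT $ l $ j)"
    by (subst sum.Plus) (simp_all add: Mmat_def stack_def)
  also have "(\<Sum>l\<in>UNIV. (if l = i then -1 else 0) * DT $ l $ j) = - DT $ i $ j"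
    by (simp add: if_distrib[of "\<lambda>x. x * _"] cong: if_cong)
  finally show ?thesis by simp
qed

lemma Mmat_stack_eq: "Mmat A ** stack DB DT = A ** DB - DT"
  unfolding vec_eq_iff Mmat_stack_nth by (simp add: matrix_matrix_mult_def)

lemma matrix_mult_diff_split:
  fixes A :: "real^'p::finite^'n" and B B' :: "real^'q^'p" and T T' :: "real^'q^'n"
  shows "A ** B - T = (A ** B' - T') + (A ** (B - B') - (T - T'))"
  by (simp add: vec_eq_iff matrix_matrix_mult_def right_diff_distrib sum_subtractf)

lemma residual_at_truth:
  "Xn X ** Bstar S - (Theta_star E S + rows_on K (xi X E S)) = xi X E S - rows_on K (xi X E S)"
  by (simp add: xi_def algebra_simps)

lemma norm_column: "norm (column j A) = L2_set (\<lambda>i. A $ i $ j) UNIV"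
  by (simp add: norm_vec_eq_L2_set column_def)

lemma inner_column: "column j A \<bullet> column j B = (\<Sum>i\<in>UNIV. A $ i $ j * B $ i $ j)"
  by (simp add: inner_vec_def column_def)

lemma Fobj_eq:
  "Fobj X lam gam B T =
     (\<Sum>j\<in>UNIV. L2_set (\<lambda>i. (Xn X ** B - T) $ i $ j) UNIV)
     + lam * ((\<Sum>i\<in>UNIV. L2_set (\<lambda>j. T $ i $ j) UNIV) + gam * (\<Sum>i\<in>UNIV. \<Sum>j\<in>UNIV. \<bar>B $ i $ j\<bar>))"
  by (simp add: Fobj_def norm_vec_eq_L2_set column_def)

lemma Bstar_diag: "matrix_inv S $ j $ j \<noteq> 0 \<Longrightarrow> Bstar S $ j $ j = 1"
  by (simp add: Bstar_def)

lemma scaled_threshold_le: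
  fixes c M L :: real
  assumes c: "1 < c" and threshold: "(c + 1) / (c - 1) * M \<le> L"
  shows "M \<le> (c - 1) / (c + 1) * L"
proof -
  have "M = (c - 1) / (c + 1) * ((c + 1) / (c - 1) * M)" using c by simp
  also have "\<dots> \<le> (c - 1) / (c + 1) * L" using c threshold by (intro mult_left_mono) auto
  finally show ?thesis .
qed

text \<open>The tuning conditions are stated for the standardised noise eps, whose columns are rescaled
  columns of xi; both ratios involved are invariant under such rescaling.\<close>
lemma correlation_threshold_rescaled:
  fixes Z x e :: "'n \<Rightarrow> 'p::finite \<Rightarrow> real"
  assumes c: "1 < c"
    and scale: "\<And>i. e i j = s * x i j" and s: "s \<noteq> 0" and pos: "0 < L2_set (\<lambda>i. x i j) A"
    and threshold: "(c + 1) / (c - 1) *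
      (MAX j'\<in>UNIV. Max (insert 0 {\<bar>\<Sum>i\<in>A. Z i l * e i j'\<bar> | l. l \<noteq> j'}) / L2_set (\<lambda>i. e i j') A) \<le> L"
    and lj: "l \<noteq> j"
  shows "\<bar>\<Sum>i\<in>A. Z i l * x i j\<bar> \<le> (c - 1) / (c + 1) * L * L2_set (\<lambda>i. x i j) A"
proof -
  have "\<bar>\<Sum>i\<in>A. Z i l * e i j\<bar> / L2_set (\<lambda>i. e i j) A = \<bar>\<Sum>i\<in>A. Z i l * x i j\<bar> / L2_set (\<lambda>i. x i j) A"
    using s by (simp add: scale L2_set_mult_abs sum_distrib_left[symmetric] mult.left_commute abs_mult)
  moreover have "\<bar>\<Sum>i\<in>A. Z i l * e i j\<bar> / L2_set (\<lambda>i. e i j) A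
      \<le> Max (insert 0 {\<bar>\<Sum>i\<in>A. Z i l * e i j\<bar> | l. l \<noteq> j}) / L2_set (\<lambda>i. e i j) A"
    by (intro divide_right_mono Max_ge) (use lj in auto)
  moreover have "\<dots> \<le> (MAX j'\<in>UNIV. Max (insert 0 {\<bar>\<Sum>i\<in>A. Z i l * e i j'\<bar> | l. l \<noteq> j'}) / L2_set (\<lambda>i. e i j') A)"
    by (rule Max_ge) auto
  ultimately have "\<bar>\<Sum>i\<in>A. Z i l * x i j\<bar> / L2_set (\<lambda>i. x i j) A \<le> (c - 1) / (c + 1) * L"
    using scaled_threshold_le[OF c threshold] by linarith
  then show ?thesis using pos by (simp add: pos_divide_le_eq)
qed

lemma row_threshold_rescaled:
  fixes x e :: "'n::finite \<Rightarrow> 'p::finite \<Rightarrow> real"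
  assumes c: "1 < c"
    and scale: "\<And>i j. e i j = s j * x i j" and s: "\<And>j. s j \<noteq> 0"
    and threshold: "(c + 1) / (c - 1) *
      (MAX i'\<in>UNIV. sqrt (\<Sum>j\<in>UNIV. (e i' j)\<^sup>2 / (\<Sum>i\<in>A. (e i j)\<^sup>2))) \<le> L"
  shows "sqrt (\<Sum>j\<in>UNIV. (x i' j)\<^sup>2 / (\<Sum>i\<in>A. (x i j)\<^sup>2)) \<le> (c - 1) / (c + 1) * L"
proof -
  have "(e i' j)\<^sup>2 / (\<Sum>i\<in>A. (e i j)\<^sup>2) = (x i' j)\<^sup>2 / (\<Sum>i\<in>A. (x i j)\<^sup>2)" for j
    using s[of j] by (simp add: scale power_mult_distrib sum_distrib_left[symmetric])
  then have "sqrt (\<Sum>j\<in>UNIV. (x i' j)\<^sup>2 / (\<Sum>i\<in>A. (x i j)\<^sup>2))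
      = sqrt (\<Sum>j\<in>UNIV. (e i' j)\<^sup>2 / (\<Sum>i\<in>A. (e i j)\<^sup>2))" by simp
  also have "\<dots> \<le> (MAX i'\<in>UNIV. sqrt (\<Sum>j\<in>UNIV. (e i' j)\<^sup>2 / (\<Sum>i\<in>A. (e i j)\<^sup>2)))"
    by (rule Max_ge) auto
  finally show ?thesis using scaled_threshold_le[OF c threshold] by linarith
qed

lemma sum_minus_rows_on:
  fixes A :: "real^'p^'n::finite"
  assumes "I \<union> K = UNIV" "I \<inter> K = {}"
  shows "(\<Sum>i\<in>UNIV. f i ((A - rows_on K A) $ i $ j)) = (\<Sum>i\<in>I. f i (A $ i $ j)) + (\<Sum>i\<in>K. f i 0)"
proof -
  have "(\<Sum>i\<in>UNIV. f i ((A - rows_on K A) $ i $ j))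
      = (\<Sum>i\<in>I. f i ((A - rows_on K A) $ i $ j)) + (\<Sum>i\<in>K. f i ((A - rows_on K A) $ i $ j))"
    by (rule sum_partition_UNIV[OF assms])
  also have "(\<Sum>i\<in>I. f i ((A - rows_on K A) $ i $ j)) = (\<Sum>i\<in>I. f i (A $ i $ j))"
    using assms(2) by (intro sum.cong) (auto simp: rows_on_def)
  also have "(\<Sum>i\<in>K. f i ((A - rows_on K A) $ i $ j)) = (\<Sum>i\<in>K. f i 0)"
    by (intro sum.cong) (auto simp: rows_on_def)
  finally show ?thesis .
qed

lemma L2_set_minus_rows_on:
  fixes A :: "real^'p^'n::finite"
  assumes "I \<union> K = UNIV" "I \<inter> K = {}"
  shows "L2_set (\<lambda>i. (A - rows_on K A) $ i $ j) UNIV = L2_set (\<lambda>i. A $ i $ j) I"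
  unfolding L2_set_def using sum_minus_rows_on[OF assms, of "\<lambda>_ x. x\<^sup>2"] by simp

lemma correlation_threshold_minus_rows_on:
  fixes \<xi> e Z :: "real^'p::finite^'n::finite"
  assumes partition: "I \<union> K = UNIV" "I \<inter> K = {}" and c: "1 < c"
    and scale: "\<And>i j. e $ i $ j = s j * \<xi> $ i $ j" and s: "\<And>j. s j \<noteq> 0"
    and pos: "\<And>j. 0 < L2_set (\<lambda>i. \<xi> $ i $ j) I"
    and threshold: "L \<ge> (c + 1) / (c - 1) *
      (MAX j'\<in>UNIV. Max (insert 0 {\<bar>\<Sum>i\<in>I. Z $ i $ l * e $ i $ j'\<bar> | l. l \<noteq> j'})
        / sqrt (\<Sum>i\<in>I. (e $ i $ j')\<^sup>2))"
    and lj: "l \<noteq> j"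
  shows "\<bar>\<Sum>i\<in>UNIV. (\<xi> - rows_on K \<xi>) $ i $ j * Z $ i $ l\<bar>
    \<le> (c - 1) / (c + 1) * L * L2_set (\<lambda>i. (\<xi> - rows_on K \<xi>) $ i $ j) UNIV"
proof -
  have "\<bar>\<Sum>i\<in>I. Z $ i $ l * \<xi> $ i $ j\<bar> \<le> (c - 1) / (c + 1) * L * L2_set (\<lambda>i. \<xi> $ i $ j) I"
    using correlation_threshold_rescaled[where Z = "\<lambda>i k. Z $ i $ k" and e = "\<lambda>i j. e $ i $ j"
        and x = "\<lambda>i j. \<xi> $ i $ j", OF c scale s pos threshold[folded L2_set_def] lj]
    by simp
  then show ?thesis
    unfolding L2_set_minus_rows_on[OF partition]
    using sum_minus_rows_on[OF partition, of "\<lambda>i x. x * Z $ i $ l" \<xi> j]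
    by (simp add: mult.commute)
qed

lemma row_threshold_minus_rows_on:
  fixes \<xi> e :: "real^'p::finite^'n::finite"
  assumes partition: "I \<union> K = UNIV" "I \<inter> K = {}" and c: "1 < c" and L: "0 \<le> L"
    and scale: "\<And>i j. e $ i $ j = s j * \<xi> $ i $ j" and s: "\<And>j. s j \<noteq> 0"
    and threshold: "L \<ge> (c + 1) / (c - 1) *
      (MAX i\<in>UNIV. sqrt (\<Sum>j\<in>UNIV. (e $ i $ j)\<^sup>2 / (\<Sum>i'\<in>I. (e $ i' $ j)\<^sup>2)))"
  shows "L2_set (\<lambda>j. (\<xi> - rows_on K \<xi>) $ i $ j / L2_set (\<lambda>i'. (\<xi> - rows_on K \<xi>) $ i' $ j) UNIV) UNIV
    \<le> (c - 1) / (c + 1) * L"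
proof (cases "i \<in> K")
  case True
  then show ?thesis using c L by (simp add: rows_on_def L2_set_0')
next
  case False
  then have "L2_set (\<lambda>j. (\<xi> - rows_on K \<xi>) $ i $ j / L2_set (\<lambda>i'. (\<xi> - rows_on K \<xi>) $ i' $ j) UNIV) UNIV
      = sqrt (\<Sum>j\<in>UNIV. (\<xi> $ i $ j)\<^sup>2 / (\<Sum>i'\<in>I. (\<xi> $ i' $ j)\<^sup>2))"
    unfolding L2_set_minus_rows_on[OF partition] by (simp add: rows_on_def L2_set_def power_divide sum_nonneg)
  also have "\<dots> \<le> (c - 1) / (c + 1) * L"
    using row_threshold_rescaled[where e = "\<lambda>i j. e $ i $ j" and x = "\<lambda>i j. \<xi> $ i $ j", OF c scale s threshold]
    by simp
  finally show ?thesis .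
qed

lemma eps_scale: "eps X E S $ i $ j = (sqrt (real CARD('n)) * sqrt (matrix_inv S $ j $ j)) * xi X E S $ i $ j"
  for X E :: "real^'p^'n::finite"
  by (simp add: eps_def)

lemma robust_lasso_deviation_of_data:
  fixes Y E :: "real^'p::finite^'n::finite" and Sigma :: "real^'p^'p"
    and Bh :: "real^'p^'p" and JJ :: "'p \<Rightarrow> 'p set"
  defines "X \<equiv> Y + E"
  defines "\<xi> \<equiv> xi X E Sigma"
  assumes partition: "Iset \<union> Oset = UNIV" "Iset \<inter> Oset = {}"
    and E_zero_I: "\<forall>i\<in>Iset. E $ i = 0"
    and lam_nn: "lam \<ge> 0" and gam_nn: "gam \<ge> 0"
    and Bh_diag: "\<forall>j. Bh $ j $ j = 1"
    and JJ_supp: "\<forall>i j. i \<notin> JJ j \<longrightarrow> Bstar Sigma $ i $ j = 0"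
    and eps_I_nz: "\<forall>j. \<exists>i\<in>Iset. eps X E Sigma $ i $ j \<noteq> 0"
    and c_gt: "c > 1"
    and lam_gam_bound: "lam * gam \<ge> (c + 1) / (c - 1) *
        (MAX j\<in>UNIV. Max (insert 0 {\<bar>\<Sum>i\<in>Iset. Xn X $ i $ k * eps X E Sigma $ i $ j\<bar> | k. k \<noteq> j})
           / sqrt (\<Sum>i\<in>Iset. (eps X E Sigma $ i $ j)\<^sup>2))"
    and lam_bound: "lam \<ge> (c + 1) / (c - 1) *
        (MAX i\<in>UNIV. sqrt (\<Sum>j\<in>UNIV. (eps X E Sigma $ i $ j)\<^sup>2
                                 / (\<Sum>i'\<in>Iset. (eps X E Sigma $ i' $ j)\<^sup>2)))"
  shows "robust_lasso_deviation (\<lambda>i l. Xn X $ i $ l) (\<lambda>i j. (\<xi> - rows_on Oset \<xi>) $ i $ j)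
    (\<lambda>i j. Bh $ i $ j) (\<lambda>i j. Bstar Sigma $ i $ j)
    (\<lambda>i j. (Theta_star E Sigma + rows_on Oset \<xi>) $ i $ j) Iset Oset JJ lam gam c"
proof -
  define s where "s j = sqrt (real CARD('n)) * sqrt (matrix_inv Sigma $ j $ j)" for j
  have scale: "eps X E Sigma $ i $ j = s j * \<xi> $ i $ j" for i j
    unfolding s_def \<xi>_def by (rule eps_scale)
  have s_nz: "s j \<noteq> 0" and inlier_nz: "\<exists>i\<in>Iset. \<xi> $ i $ j \<noteq> 0" for j
    using eps_I_nz unfolding scale by auto
  have noise_pos: "0 < L2_set (\<lambda>i. \<xi> $ i $ j) Iset" for j
    using inlier_nz[of j] L2_set_eq_0_iff[of Iset] L2_set_nonneg[of _ Iset]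
    by (metis finite less_eq_real_def)
  have correlation: "\<bar>\<Sum>i\<in>UNIV. (\<xi> - rows_on Oset \<xi>) $ i $ j * Xn X $ i $ l\<bar>
      \<le> (c - 1) / (c + 1) * (lam * gam) * L2_set (\<lambda>i. (\<xi> - rows_on Oset \<xi>) $ i $ j) UNIV"
    if "l \<noteq> j" for j l
    by (rule correlation_threshold_minus_rows_on[OF partition c_gt scale s_nz noise_pos lam_gam_bound that])
  have row: "L2_set (\<lambda>j. (\<xi> - rows_on Oset \<xi>) $ i $ j / L2_set (\<lambda>i'. (\<xi> - rows_on Oset \<xi>) $ i' $ j) UNIV) UNIV
      \<le> (c - 1) / (c + 1) * lam" for i
    by (rule row_threshold_minus_rows_on[OF partition c_gt lam_nn scale s_nz lam_bound])
  show ?thesis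
  proof
    show "Bstar Sigma $ j $ j = 1" for j
      using s_nz[of j] by (intro Bstar_diag) (auto simp: s_def)
    show "0 < L2_set (\<lambda>i. (\<xi> - rows_on Oset \<xi>) $ i $ j) UNIV" for j
      unfolding L2_set_minus_rows_on[OF partition] by (rule noise_pos)
    show "(Theta_star E Sigma + rows_on Oset \<xi>) $ i $ j = 0" if "i \<in> Iset" for i j
      using that partition E_zero_I by (auto simp: Theta_star_def matrix_matrix_mult_def rows_on_def)
  qed (use partition Bh_diag JJ_supp c_gt lam_nn gam_nn correlation row in \<open>auto simp: rows_on_def mult.assoc\<close>)
qed

theorem mainTheorem18:
  fixes Y E :: "real^'p^'n" and Sigma :: "real^'p^'p" and M_E :: real
    and Iset Oset :: "'n set" and lam gam c :: real
    and Bh :: "real^'p^'p" and Th :: "real^'p^'n"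
    and JJ :: "'p \<Rightarrow> 'p set" and V :: "real^'p^'n"
  assumes Sigma_pd: "pos_def_mat Sigma"
    and partition: "Iset \<union> Oset = UNIV" "Iset \<inter> Oset = {}"
    and E_zero_I: "\<forall>i\<in>Iset. E $ i = 0"
    and E_bound: "\<exists>R. is_inv_sqrt R Sigma \<and> (\<forall>i. norm ((E ** R) $ i) \<le> M_E * sqrt (real CARD('p)))"
    and lam_nn: "lam \<ge> 0" and gam_nn: "gam \<ge> 0"
    and Bh_diag: "\<forall>j. Bh $ j $ j = 1"
    and minimizer: "\<forall>B T. (\<forall>j. B $ j $ j = 1) \<longrightarrow>
        Fobj (Y + E) lam gam Bh Th \<le> Fobj (Y + E) lam gam B T"
    and JJ_supp: "\<forall>i j. i \<notin> JJ j \<longrightarrow> Bstar Sigma $ i $ j = 0"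
    and eps_I_nz: "\<forall>j. \<exists>i\<in>Iset. eps (Y + E) E Sigma $ i $ j \<noteq> 0"
    and c_gt: "c > 1"
    and lam_gam_bound: "lam * gam \<ge> (c + 1) / (c - 1) *
        (MAX j\<in>UNIV. Max (insert 0 {\<bar>\<Sum>i\<in>Iset. Xn (Y + E) $ i $ k * eps (Y + E) E Sigma $ i $ j\<bar> | k. k \<noteq> j})
           / sqrt (\<Sum>i\<in>Iset. (eps (Y + E) E Sigma $ i $ j)\<^sup>2))"
    and lam_bound: "lam \<ge> (c + 1) / (c - 1) *
        (MAX i\<in>UNIV. sqrt (\<Sum>j\<in>UNIV. (eps (Y + E) E Sigma $ i $ j)\<^sup>2
                                 / (\<Sum>i'\<in>Iset. (eps (Y + E) E Sigma $ i' $ j)\<^sup>2)))"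
    and V_rows: "\<forall>i. norm (V $ i) \<le> 1"
    and V_ineq: "\<forall>j.
        let X = Y + E; \<xi> = xi X E Sigma; \<xi>bar = \<xi> - rows_on Oset \<xi>;
            DB = Bh - Bstar Sigma; DT = Th - (Theta_star E Sigma + rows_on Oset \<xi>);
            MD = Mmat (Xn X) ** stack DB DT
        in (norm (column j MD))\<^sup>2
           \<le> - 2 * (column j \<xi>bar \<bullet> column j MD)
             - 2 * lam * norm (column j \<xi>bar) * (column j V \<bullet> column j DT)
             + 2 * lam * gam * norm (column j \<xi>bar)
                 * ((\<Sum>i\<in>UNIV - {j}. \<bar>Bstar Sigma $ i $ j\<bar>) - (\<Sum>i\<in>UNIV - {j}. \<bar>Bh $ i $ j\<bar>))
             + lam\<^sup>2 * (gam * (\<Sum>i\<in>UNIV. \<bar>DB $ i $ j\<bar>) + \<bar>column j V \<bullet> column j DT\<bar>)\<^sup>2"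
  shows "let X = Y + E; \<xi> = xi X E Sigma;
             DB = Bh - Bstar Sigma; DT = Th - (Theta_star E Sigma + rows_on Oset \<xi>);
             MD = Mmat (Xn X) ** stack DB DT;
             S = gam * (\<Sum>j\<in>UNIV. \<Sum>i\<in>JJ j. \<bar>DB $ i $ j\<bar>) + (\<Sum>i\<in>Oset. norm (DT $ i))
         in (frob MD)\<^sup>2
            \<le> 4 * lam * c * (MAX j\<in>UNIV. sqrt (\<Sum>i\<in>Iset. (\<xi> $ i $ j)\<^sup>2)) * S
              + lam\<^sup>2 * (1 + c)\<^sup>2 * S\<^sup>2"
proof -
  define X where "X = Y + E"
  define \<xi> where "\<xi> = xi X E Sigma"
  define Tb where "Tb = Theta_star E Sigma + rows_on Oset \<xi>"
  define MD where "MD = Mmat (Xn X) ** stack (Bh - Bstar Sigma) (Th - Tb)"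
  interpret robust_lasso_deviation "\<lambda>i l. Xn X $ i $ l" "\<lambda>i j. (\<xi> - rows_on Oset \<xi>) $ i $ j"
      "\<lambda>i j. Bh $ i $ j" "\<lambda>i j. Bstar Sigma $ i $ j" "\<lambda>i j. Th $ i $ j" "\<lambda>i j. Tb $ i $ j"
      Iset Oset JJ lam gam c
    unfolding \<xi>_def Tb_def X_def
    using partition E_zero_I lam_nn gam_nn Bh_diag JJ_supp eps_I_nz c_gt lam_gam_bound lam_bound
    by (rule robust_lasso_deviation_of_data)
  have MD: "MD = Xn X ** (Bh - Bstar Sigma) - (Th - Tb)"
    by (simp add: MD_def Mmat_stack_eq)
  have pred_err: "pred_err i j = MD $ i $ j" for i j
    by (simp add: MD pred_err_def B_dev_def T_dev_def matrix_matrix_mult_def)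
  have truth: "Xn X ** Bstar Sigma - Tb = \<xi> - rows_on Oset \<xi>"
    unfolding Tb_def \<xi>_def by (rule residual_at_truth)
  have "Fobj X lam gam Bh Th \<le> Fobj X lam gam (Bstar Sigma) Tb"
    using minimizer Bs_diag unfolding X_def by blast
  note basic = this[unfolded Fobj_eq matrix_mult_diff_split[of "Xn X" Bh Th "Bstar Sigma" Tb] truth MD[symmetric]]
  note columns = V_ineq[unfolded Let_def X_def[symmetric] \<xi>_def[symmetric] Tb_def[symmetric] MD_def[symmetric]
      norm_column inner_column, rule_format]
  have "(\<Sum>j\<in>UNIV. (L2_set (\<lambda>i. pred_err i j) UNIV)\<^sup>2)
      \<le> 4 * lam * c * noise_max * support_dev + lam\<^sup>2 * (1 + c)\<^sup>2 * support_dev\<^sup>2"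
    by (rule prediction_error_bound[where V = "\<lambda>i j. V $ i $ j"];
        (unfold noise_norm_def T_dev_def col_dev_def B_dev_def)?;
        use basic V_rows columns in \<open>simp add: pred_err norm_vec_eq_L2_set\<close>)
  moreover have "noise_max = (MAX j\<in>UNIV. sqrt (\<Sum>i\<in>Iset. (\<xi> $ i $ j)\<^sup>2))"
    unfolding noise_max_def noise_norm_def L2_set_minus_rows_on[OF partition] by (simp only: L2_set_def)
  moreover have "support_dev = gam * (\<Sum>j\<in>UNIV. \<Sum>i\<in>JJ j. \<bar>(Bh - Bstar Sigma) $ i $ j\<bar>)
      + (\<Sum>i\<in>Oset. norm ((Th - Tb) $ i))"
    unfolding support_dev_def row_dev_def B_dev_def by (simp add: norm_vec_eq_L2_set T_dev_def[abs_def])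
  ultimately show ?thesis
    unfolding Let_def X_def[symmetric] \<xi>_def[symmetric] Tb_def[symmetric] MD_def[symmetric] frob_squared
    by (simp add: pred_err)
qed

end
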